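(* Let $P$ be a finite poset with a unit OC interval representation $\{I_x : x\in P\}$ (each $I_x$ of length $1$, open or closed). Let $Q$ be the poset on the same ground set in which, for distinct $x,y$, $x<y$ in $Q$ if and only if the open interval $\operatorname{int}(I_x)$ lies entirely to the left of $\operatorname{int}(I_y)$ (i.e. the right endpoint of $I_x$ is at most the left endpoint of $I_y$). Partition $Q$ into antichains $A_1,\dots,A_t$ by letting $A_1$ be the set of minimal elements of $Q$, $A_2$ the set of minimal elements of $Q$ with $A_1$ removed, and so on. Then for all $i$ and all $j \ge i+2$, every $a \in A_i$ and $b \in A_j$ satisfy $a < b$ in $P$. Consequently, any two incomparable elements of $P$ lie in the same antichain $A_i$ or in consecutive antichains $A_i, A_{i+1}$.
   Context: Posets are finite and reflexive. A unit OC interval representation of a poset $P$ assigns to each element $x$ a real interval $I_x$ of length $1$ which is either open $(a,a+1)$ or closed $[a,a+1]$, such that for distinct $x,y$, $x<y$ in $P$ if and only if $I_x$ and $I_y$ are disjoint and every point of $I_x$ is less than every point of $I_y$. *)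

theory Defs
  imports Complex_Main
begin

definition unit_interval :: "real \<Rightarrow> bool \<Rightarrow> real set" where
  "unit_interval l is_closed = (if is_closed then {l..l+1} else {l<..<l+1})"

definition interval_before :: "real set \<Rightarrow> real set \<Rightarrow> bool" where
  "interval_before I J \<longleftrightarrow> I \<inter> J = {} \<and> (\<forall>p\<in>I. \<forall>q\<in>J. p < q)"

definition poset_on :: "'a set \<Rightarrow> ('a \<Rightarrow> 'a \<Rightarrow> bool) \<Rightarrow> bool" where
  "poset_on X le \<longleftrightarrow> finite X \<and> (\<forall>x\<in>X. le x x)
     \<and> (\<forall>x\<in>X. \<forall>y\<in>X. le x y \<and> le y x \<longrightarrow> x = y)
     \<and> (\<forall>x\<in>X. \<forall>y\<in>X. \<forall>z\<in>X. le x y \<and> le y z \<longrightarrow> le x z)"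

definition unit_OC_rep :: "'a set \<Rightarrow> ('a \<Rightarrow> 'a \<Rightarrow> bool) \<Rightarrow> ('a \<Rightarrow> real) \<Rightarrow> ('a \<Rightarrow> bool) \<Rightarrow> bool" where
  "unit_OC_rep X le l c \<longleftrightarrow> (\<forall>x\<in>X. \<forall>y\<in>X. x \<noteq> y \<longrightarrow>
     ((le x y \<and> x \<noteq> y) \<longleftrightarrow> interval_before (unit_interval (l x) (c x)) (unit_interval (l y) (c y))))"

definition Q_less :: "('a \<Rightarrow> real) \<Rightarrow> 'a \<Rightarrow> 'a \<Rightarrow> bool" where
  "Q_less l x y \<longleftrightarrow> x \<noteq> y \<and> l x + 1 \<le> l y"

definition Q_minimal :: "('a \<Rightarrow> real) \<Rightarrow> 'a set \<Rightarrow> 'a set" where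
  "Q_minimal l S = {x \<in> S. \<not> (\<exists>y\<in>S. Q_less l y x)}"

fun Q_rest :: "'a set \<Rightarrow> ('a \<Rightarrow> real) \<Rightarrow> nat \<Rightarrow> 'a set" where
  "Q_rest X l 0 = X"
| "Q_rest X l (Suc k) = Q_rest X l k - Q_minimal l (Q_rest X l k)"

text \<open>Antichain layer k (0-indexed: Q_layer X l k is the paper's A_(k+1)).\<close>
definition Q_layer :: "'a set \<Rightarrow> ('a \<Rightarrow> real) \<Rightarrow> nat \<Rightarrow> 'a set" where
  "Q_layer X l k = Q_minimal l (Q_rest X l k)"

end

theory Submission
  imports Defs
begin

text \<open>If a lies in the layer A_i and b in A_j with j \<ge> i + 2, then b has a Q-predecessor y in
  a layer after A_i, and y in turn a Q-predecessor z that was still present when A_i was formed.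
  Minimality of a gives l a < l z + 1 \<le> l y \<le> l b - 1, so the closed hulls of I_a and I_b are
  disjoint and a < b in P, whatever the open/closed type of the intervals.
  Since every element lies in some layer, incomparable elements lie in equal or consecutive layers.\<close>

lemma unit_interval_subset: "unit_interval a c \<subseteq> {a..a+1}"
  by (auto simp: unit_interval_def)

lemma interval_before_unit_interval:
  assumes "la + 1 < lb"
  shows "interval_before (unit_interval la ca) (unit_interval lb cb)"
  using unit_interval_subset[of la ca] unit_interval_subset[of lb cb] assms
  unfolding interval_before_def by fastforce

lemma unit_OC_rep_less_if_gap:
  assumes "unit_OC_rep X le l c" "a \<in> X" "b \<in> X" "l a + 1 < l b"
  shows "le a b \<and> a \<noteq> b"
proof -
  have "a \<noteq> b" using assms(4) by auto
  with assms show ?thesis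
    using interval_before_unit_interval unfolding unit_OC_rep_def by blast
qed

lemma Q_minimal_subset: "Q_minimal l S \<subseteq> S"
  by (auto simp: Q_minimal_def)

lemma Q_minimal_nonempty:
  assumes "finite S" "S \<noteq> {}"
  shows "Q_minimal l S \<noteq> {}"
proof -
  have "Min (l ` S) \<in> l ` S" using assms by simp
  then obtain x where x: "x \<in> S" "l x = Min (l ` S)" by auto
  then have "\<forall>y\<in>S. l x \<le> l y" using assms(1) by simp
  with x(1) have "x \<in> Q_minimal l S" by (auto simp: Q_minimal_def Q_less_def)
  then show ?thesis by blast
qed

lemma Q_rest_subset: "Q_rest X l k \<subseteq> X"
  by (induction k) auto

lemma Q_rest_antimono: "k \<le> m \<Longrightarrow> Q_rest X l m \<subseteq> Q_rest X l k"
  by (induction m rule: dec_induct) auto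

lemma Q_layer_subset: "Q_layer X l k \<subseteq> Q_rest X l k"
  unfolding Q_layer_def by (rule Q_minimal_subset)

lemma Q_rest_Suc_has_predecessor:
  assumes "y \<in> Q_rest X l (Suc k)"
  shows "\<exists>z\<in>Q_rest X l k. Q_less l z y"
  using assms by (auto simp: Q_minimal_def)

lemma Q_layer_gap:
  assumes a: "a \<in> Q_layer X l i" and b: "b \<in> Q_layer X l j" and ij: "i + 2 \<le> j"
  shows "l a + 1 < l b"
proof -
  obtain j' where j': "j = Suc j'" "Suc i \<le> j'" using ij by (cases j) auto
  have "b \<in> Q_rest X l (Suc j')" using subsetD[OF Q_layer_subset b] j'(1) by (simp only:)
  from Q_rest_Suc_has_predecessor[OF this]
  obtain y where y: "y \<in> Q_rest X l j'" "Q_less l y b" by blast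
  have "y \<in> Q_rest X l (Suc i)" using subsetD[OF Q_rest_antimono[OF j'(2)] y(1)] .
  from Q_rest_Suc_has_predecessor[OF this]
  obtain z where z: "z \<in> Q_rest X l i" "Q_less l z y" by blast
  have "\<not> Q_less l z a" using a z(1) by (auto simp: Q_layer_def Q_minimal_def)
  then have "l a < l z + 1" using z(2) by (auto simp: Q_less_def)
  moreover have "l z + 1 \<le> l y" "l y + 1 \<le> l b" using y(2) z(2) by (auto simp: Q_less_def)
  ultimately show ?thesis by linarith
qed

lemma card_Q_rest: "finite X \<Longrightarrow> card (Q_rest X l k) \<le> card X - k"
proof (induction k)
  case 0
  then show ?case by simp
next
  case (Suc k)
  have fin: "finite (Q_rest X l k)" using finite_subset[OF Q_rest_subset Suc.prems] .
  show ?case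
  proof (cases "Q_rest X l k = {}")
    case True
    then show ?thesis by simp
  next
    case False
    then have "Q_rest X l (Suc k) \<subset> Q_rest X l k"
      using Q_minimal_nonempty[OF fin] Q_minimal_subset by fastforce
    then have "card (Q_rest X l (Suc k)) < card (Q_rest X l k)"
      using fin by (rule psubset_card_mono[rotated])
    then show ?thesis using Suc by linarith
  qed
qed

lemma Q_rest_card_empty:
  assumes "finite X"
  shows "Q_rest X l (card X) = {}"
proof -
  have "finite (Q_rest X l (card X))" using finite_subset[OF Q_rest_subset assms] .
  moreover have "card (Q_rest X l (card X)) = 0" using card_Q_rest[OF assms, of l "card X"] by simp
  ultimately show ?thesis by simp
qed

lemma Q_layer_exists_if_removed:
  "x \<in> X \<Longrightarrow> x \<notin> Q_rest X l n \<Longrightarrow> \<exists>k. x \<in> Q_layer X l k"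
proof (induction n)
  case 0
  then show ?case by simp
next
  case (Suc n)
  then show ?case by (cases "x \<in> Q_rest X l n") (auto simp: Q_layer_def)
qed

lemma Q_layer_exists: "finite X \<Longrightarrow> x \<in> X \<Longrightarrow> \<exists>k. x \<in> Q_layer X l k"
  using Q_layer_exists_if_removed[of x X l "card X"] Q_rest_card_empty[of X l] by blast

lemma Q_layer_subset_ground: "Q_layer X l k \<subseteq> X"
  using Q_layer_subset Q_rest_subset by (rule subset_trans)

theorem mainTheorem3:
  fixes X :: "'a set" and le :: "'a \<Rightarrow> 'a \<Rightarrow> bool"
    and l :: "'a \<Rightarrow> real" and c :: "'a \<Rightarrow> bool"
  assumes "poset_on X le"
    and "unit_OC_rep X le l c"
  shows "(\<forall>i j. i + 2 \<le> j \<longrightarrow>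
            (\<forall>a\<in>Q_layer X l i. \<forall>b\<in>Q_layer X l j. le a b \<and> a \<noteq> b))
       \<and> (\<forall>x\<in>X. \<forall>y\<in>X. \<not> le x y \<and> \<not> le y x \<longrightarrow>
            (\<exists>i. (x \<in> Q_layer X l i \<and> y \<in> Q_layer X l i)
               \<or> (x \<in> Q_layer X l i \<and> y \<in> Q_layer X l (Suc i))
               \<or> (y \<in> Q_layer X l i \<and> x \<in> Q_layer X l (Suc i))))"
    (is "?far \<and> ?incomparable")
proof
  show far: ?far
  proof (intro allI impI ballI)
    fix i j a b assume "i + 2 \<le> j" "a \<in> Q_layer X l i" "b \<in> Q_layer X l j"
    then show "le a b \<and> a \<noteq> b"
      by (meson unit_OC_rep_less_if_gap[OF assms(2)] Q_layer_gap Q_layer_subset_ground subsetD)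
  qed
  have "finite X" using assms(1) by (simp add: poset_on_def)
  show ?incomparable
  proof (intro ballI impI)
    fix x y assume "x \<in> X" "y \<in> X" and incomp: "\<not> le x y \<and> \<not> le y x"
    then obtain i j where i: "x \<in> Q_layer X l i" and j: "y \<in> Q_layer X l j"
      using Q_layer_exists[OF \<open>finite X\<close>] by blast
    have "\<not> i + 2 \<le> j" "\<not> j + 2 \<le> i" using far i j incomp by metis+
    then have "i = j \<or> j = Suc i \<or> i = Suc j" by arith
    then show "\<exists>i. (x \<in> Q_layer X l i \<and> y \<in> Q_layer X l i)
               \<or> (x \<in> Q_layer X l i \<and> y \<in> Q_layer X l (Suc i))
               \<or> (y \<in> Q_layer X l i \<and> x \<in> Q_layer X l (Suc i))"
      using i j by blast
  qed
qed

end
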